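(* For every $z\in\{1,\dots,m-1\}$: (i) for all integers $x\in[x_z,z]$, $d_F(\tau_{x,z},P[t_x,t_z])\le4\Delta$, and for all integers $y\in[z+1,y_z]$, $d_F(\tau_{z+1,y},P[t_{z+1},t_y])\le4\Delta$; (ii) for all integers $x\in[1,x_z)$, $d_F(\tau_{x,z},P[t_x,t_z])>2\Delta$, and for all integers $y\in(y_z,m]$, $d_F(\tau_{z+1,y},P[t_{z+1},t_y])>2\Delta$.
   Context: Let $d\ge1$ and let $P:[0,1]\to\mathbb R^d$ be a polygonal curve with breakpoint parameters $0=t_1<t_2<\dots<t_m=1$, and fix $\Delta>0$. For $0\le a\le b\le1$, $P[a,b]$ is the subcurve from $P(a)$ to $P(b)$. The Fréchet distance $d_F(P,Q)=\inf_\gamma\sup_{t\in[0,1]}\|P(\gamma(t))-Q(t)\|$, $\gamma$ over increasing homeomorphisms of $[0,1]$. For $1\le a\le b\le m$, $\tau_{a,b}$ is the segment from $P(t_a)$ to $P(t_b)$. For $z\in\{1,\dots,m-1\}$, $x_z$ is the smallest integer $x'\in\{1,\dots,z\}$ such that $d_F(\tau_{x,z},P[t_x,t_z])\le4\Delta$ for every integer $x\in[x',z]$, and $y_z$ is the largest integer $y'\in\{z+1,\dots,m\}$ such that $d_F(\tau_{z+1,y},P[t_{z+1},t_y])\le4\Delta$ for every integer $y\in[z+1,y']$. *)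

theory Defs
  imports "HOL-Analysis.Analysis"
begin

definition inc_homeo01 :: "(real \<Rightarrow> real) \<Rightarrow> bool" where
  "inc_homeo01 \<gamma> \<longleftrightarrow> \<gamma> ` {0..1} = {0..1} \<and> continuous_on {0..1} \<gamma> \<and> strict_mono_on {0..1} \<gamma>"

definition frechet_dist :: "(real \<Rightarrow> 'a::real_normed_vector) \<Rightarrow> (real \<Rightarrow> 'a) \<Rightarrow> real" where
  "frechet_dist P Q = Inf {(SUP t\<in>{0..1}. norm (P (\<gamma> t) - Q t)) | \<gamma>. inc_homeo01 \<gamma>}"

definition subcurve :: "(real \<Rightarrow> 'a::real_vector) \<Rightarrow> real \<Rightarrow> real \<Rightarrow> real \<Rightarrow> 'a" where
  "subcurve P a b = (\<lambda>s. P (a + s * (b - a)))"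

definition seg_curve :: "'a::real_vector \<Rightarrow> 'a \<Rightarrow> real \<Rightarrow> 'a" where
  "seg_curve p q = (\<lambda>s. (1 - s) *\<^sub>R p + s *\<^sub>R q)"

definition tau :: "(real \<Rightarrow> 'a::real_vector) \<Rightarrow> (nat \<Rightarrow> real) \<Rightarrow> nat \<Rightarrow> nat \<Rightarrow> real \<Rightarrow> 'a" where
  "tau P t a b = seg_curve (P (t a)) (P (t b))"

definition polygonal :: "(real \<Rightarrow> 'a::real_vector) \<Rightarrow> (nat \<Rightarrow> real) \<Rightarrow> nat \<Rightarrow> bool" where
  "polygonal P t m \<longleftrightarrow> m \<ge> 1 \<and> t 1 = 0 \<and> t m = 1 \<and> strict_mono_on {1..m} t \<and>
     (\<forall>i\<in>{1..<m}. \<forall>s\<in>{t i..t (Suc i)}.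
        P s = P (t i) + ((s - t i) / (t (Suc i) - t i)) *\<^sub>R (P (t (Suc i)) - P (t i)))"

definition x_idx :: "(real \<Rightarrow> 'a::real_normed_vector) \<Rightarrow> (nat \<Rightarrow> real) \<Rightarrow> real \<Rightarrow> nat \<Rightarrow> nat" where
  "x_idx P t \<Delta> z = (LEAST x'. x' \<in> {1..z} \<and>
     (\<forall>x\<in>{x'..z}. frechet_dist (tau P t x z) (subcurve P (t x) (t z)) \<le> 4 * \<Delta>))"

definition y_idx :: "(real \<Rightarrow> 'a::real_normed_vector) \<Rightarrow> (nat \<Rightarrow> real) \<Rightarrow> nat \<Rightarrow> real \<Rightarrow> nat \<Rightarrow> nat" where
  "y_idx P t m \<Delta> z = (GREATEST y'. y' \<in> {z+1..m} \<and>
     (\<forall>y\<in>{z+1..y'}. frechet_dist (tau P t (z+1) y) (subcurve P (t (z+1)) (t y)) \<le> 4 * \<Delta>))"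

end

theory Submission imports Defs begin

text \<open>If the segment from P(a) to P(b) is within Frechet distance D of P[a,b], then for
  a \<le> c \<le> d \<le> b the segment from P(c) to P(d) is within 2D of P[c,d]: restricting a
  near-optimal matching to the preimage of [c,d] matches P[c,d] with the piece of the long
  segment between two points that are within D of P(c) and P(d), and that piece differs from
  the segment P(c)P(d) by at most D everywhere.  Hence a distance \<le> 2\<Delta> at some x forces
  distance \<le> 4\<Delta> at every x' between x and z, so the maximal good interval [x_z, z] can only
  stop at indices whose distance exceeds 2\<Delta>; symmetrically for y_z.\<close>

lemma convex_comb_mem_interval:
  fixes a b u :: real
  assumes "u \<in> {0..1}" "a \<le> b"
  shows "a + u * (b - a) \<in> {a..b}"
proof -
  have "u * (b - a) \<le> b - a" using assms by (intro mult_left_le_one_le) auto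
  moreover have "0 \<le> u * (b - a)" using assms by simp
  ultimately show ?thesis by simp
qed

lemma inc_homeo01D:
  assumes "inc_homeo01 g"
  shows inc_homeo01_in: "u \<in> {0..1} \<Longrightarrow> g u \<in> {0..1}"
    and inc_homeo01_less: "u \<in> {0..1} \<Longrightarrow> v \<in> {0..1} \<Longrightarrow> u < v \<Longrightarrow> g u < g v"
    and inc_homeo01_le: "u \<in> {0..1} \<Longrightarrow> v \<in> {0..1} \<Longrightarrow> u \<le> v \<Longrightarrow> g u \<le> g v"
    and inc_homeo01_continuous: "continuous_on {0..1} g"
  using assms unfolding inc_homeo01_def
  by (auto simp: strict_mono_on_def order.order_iff_strict)

lemma inc_homeo01_id: "inc_homeo01 (\<lambda>u. u)"
  unfolding inc_homeo01_def by (auto simp: strict_mono_on_def)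

lemma inc_homeo01_restrict:
  assumes g: "inc_homeo01 g" and \<alpha>\<beta>: "0 \<le> \<alpha>" "\<alpha> < \<beta>" "\<beta> \<le> 1"
  shows "inc_homeo01 (\<lambda>u. (g (\<alpha> + u * (\<beta> - \<alpha>)) - g \<alpha>) / (g \<beta> - g \<alpha>))"
proof -
  define w where "w u = \<alpha> + u * (\<beta> - \<alpha>)" for u
  have w_mem: "w u \<in> {\<alpha>..\<beta>}" if "u \<in> {0..1}" for u
    using convex_comb_mem_interval[OF that] \<alpha>\<beta> by (simp add: w_def)
  have w_less: "u < v \<Longrightarrow> w u < w v" for u v
    using \<alpha>\<beta> by (simp add: w_def)
  have sub: "{\<alpha>..\<beta>} \<subseteq> {0..1}" using \<alpha>\<beta> by auto
  have w_unit: "w u \<in> {0..1}" if "u \<in> {0..1}" for u using w_mem[OF that] sub by blast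
  have r: "g \<alpha> < g \<beta>" using inc_homeo01_less[OF g] \<alpha>\<beta> by auto
  have range: "g \<alpha> \<le> g (w u) \<and> g (w u) \<le> g \<beta>" if "u \<in> {0..1}" for u
    using w_mem[OF that] w_unit[OF that] \<alpha>\<beta> by (intro conjI inc_homeo01_le[OF g]) auto
  show ?thesis
    unfolding inc_homeo01_def w_def[symmetric]
  proof (intro conjI)
    show "(\<lambda>u. (g (w u) - g \<alpha>) / (g \<beta> - g \<alpha>)) ` {0..1} = {0..1}"
    proof (intro equalityI subsetI)
      fix y assume "y \<in> (\<lambda>u. (g (w u) - g \<alpha>) / (g \<beta> - g \<alpha>)) ` {0..1}"
      then show "y \<in> {0..1}" using range r by (auto simp: divide_le_eq)
    next
      fix v :: real assume v: "v \<in> {0..1}"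
      have "g \<alpha> + v * (g \<beta> - g \<alpha>) \<in> {g \<alpha>..g \<beta>}"
        using convex_comb_mem_interval[OF v] r by simp
      then have lo: "g \<alpha> \<le> g \<alpha> + v * (g \<beta> - g \<alpha>)" and hi: "g \<alpha> + v * (g \<beta> - g \<alpha>) \<le> g \<beta>"
        by auto
      have "continuous_on {\<alpha>..\<beta>} g"
        using continuous_on_subset[OF inc_homeo01_continuous[OF g] sub] .
      then obtain s where s: "\<alpha> \<le> s" "s \<le> \<beta>" "g s = g \<alpha> + v * (g \<beta> - g \<alpha>)"
        using IVT'[of g \<alpha> _ \<beta>, OF lo hi] \<alpha>\<beta> by auto
      have "w ((s - \<alpha>) / (\<beta> - \<alpha>)) = s" using \<alpha>\<beta> by (simp add: w_def)
      moreover have "(s - \<alpha>) / (\<beta> - \<alpha>) \<in> {0..1}" using s \<alpha>\<beta> by (simp add: divide_le_eq)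
      ultimately show "v \<in> (\<lambda>u. (g (w u) - g \<alpha>) / (g \<beta> - g \<alpha>)) ` {0..1}"
        using s r by (intro image_eqI[of _ _ "(s - \<alpha>) / (\<beta> - \<alpha>)"]) auto
    qed
    have "w ` {0..1} \<subseteq> {0..1}" using w_unit by blast
    moreover have "continuous_on {0..1} w" unfolding w_def by (intro continuous_intros)
    ultimately have "continuous_on {0..1} (g \<circ> w)"
      using continuous_on_compose continuous_on_subset[OF inc_homeo01_continuous[OF g]] by blast
    then show "continuous_on {0..1} (\<lambda>u. (g (w u) - g \<alpha>) / (g \<beta> - g \<alpha>))"
      using r by (auto simp: o_def intro!: continuous_intros)
    show "strict_mono_on {0..1} (\<lambda>u. (g (w u) - g \<alpha>) / (g \<beta> - g \<alpha>))"
    proof (rule strict_mono_onI)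
      fix u v :: real assume "u \<in> {0..1}" "v \<in> {0..1}" "u < v"
      then have "g (w u) < g (w v)"
        using w_unit w_less by (intro inc_homeo01_less[OF g]) auto
      then show "(g (w u) - g \<alpha>) / (g \<beta> - g \<alpha>) < (g (w v) - g \<alpha>) / (g \<beta> - g \<alpha>)"
        using r by (simp add: divide_strict_right_mono)
    qed
  qed
qed

lemma bdd_above_frechet_cost:
  fixes F G :: "real \<Rightarrow> 'a::real_normed_vector"
  assumes "bounded (F ` {0..1})" "bounded (G ` {0..1})" and h: "inc_homeo01 h"
  shows "bdd_above ((\<lambda>u. norm (F (h u) - G u)) ` {0..1})"
proof -
  obtain A B where A: "\<forall>v\<in>{0..1}. norm (F v) \<le> A" and B: "\<forall>u\<in>{0..1}. norm (G u) \<le> B"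
    using assms(1,2) unfolding bounded_iff by auto
  have "norm (F (h u) - G u) \<le> A + B" if "u \<in> {0..1}" for u
    using A B inc_homeo01_in[OF h that] that norm_triangle_ineq4[of "F (h u)" "G u"] by force
  then show ?thesis by (intro bdd_aboveI2) auto
qed

lemma frechet_dist_le:
  fixes F G :: "real \<Rightarrow> 'a::real_normed_vector"
  assumes F: "bounded (F ` {0..1})" and G: "bounded (G ` {0..1})"
    and g: "inc_homeo01 g" and close: "\<forall>u\<in>{0..1}. norm (F (g u) - G u) \<le> e"
  shows "frechet_dist F G \<le> e"
proof -
  have "bdd_below {(SUP u\<in>{0..1}. norm (F (h u) - G u)) | h. inc_homeo01 h}"
  proof (rule bdd_belowI[of _ 0], clarify)
    fix h assume h: "inc_homeo01 h"
    have "norm (F (h 0) - G 0) \<le> (SUP u\<in>{0..1}. norm (F (h u) - G u))"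
      by (rule cSUP_upper[OF _ bdd_above_frechet_cost[OF F G h]]) auto
    then show "0 \<le> (SUP u\<in>{0..1}. norm (F (h u) - G u))" by (meson norm_ge_zero order_trans)
  qed
  moreover have "(SUP u\<in>{0..1}. norm (F (g u) - G u)) \<le> e"
    using close by (intro cSUP_least) auto
  ultimately show ?thesis
    unfolding frechet_dist_def using g by (intro cInf_lower2) auto
qed

lemma frechet_dist_nonneg:
  fixes F G :: "real \<Rightarrow> 'a::real_normed_vector"
  assumes F: "bounded (F ` {0..1})" and G: "bounded (G ` {0..1})"
  shows "0 \<le> frechet_dist F G"
  unfolding frechet_dist_def
proof (rule cInf_greatest)
  show "{(SUP u\<in>{0..1}. norm (F (h u) - G u)) | h. inc_homeo01 h} \<noteq> {}"
    using inc_homeo01_id by blast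
next
  fix x assume "x \<in> {(SUP u\<in>{0..1}. norm (F (h u) - G u)) | h. inc_homeo01 h}"
  then obtain h where h: "inc_homeo01 h" and x: "x = (SUP u\<in>{0..1}. norm (F (h u) - G u))"
    by blast
  have "norm (F (h 0) - G 0) \<le> x"
    unfolding x by (rule cSUP_upper[OF _ bdd_above_frechet_cost[OF F G h]]) auto
  then show "0 \<le> x" by (meson norm_ge_zero order_trans)
qed

lemma frechet_dist_lessE:
  fixes F G :: "real \<Rightarrow> 'a::real_normed_vector"
  assumes F: "bounded (F ` {0..1})" and G: "bounded (G ` {0..1})"
    and less: "frechet_dist F G < e"
  obtains g where "inc_homeo01 g" "\<forall>u\<in>{0..1}. norm (F (g u) - G u) < e"
proof -
  have "{(SUP u\<in>{0..1}. norm (F (h u) - G u)) | h. inc_homeo01 h} \<noteq> {}"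
    using inc_homeo01_id by blast
  from cInf_lessD[OF this] less obtain g
    where g: "inc_homeo01 g" and sup: "(SUP u\<in>{0..1}. norm (F (g u) - G u)) < e"
    unfolding frechet_dist_def by blast
  have "\<forall>u\<in>{0..1}. norm (F (g u) - G u) < e"
    using cSUP_upper[OF _ bdd_above_frechet_cost[OF F G g]] sup by (meson order_le_less_trans)
  with g that show ?thesis by blast
qed

lemma bounded_seg_curve: "bounded (seg_curve p q ` {0..1})" for p q :: "'a::real_normed_vector"
proof (rule bounded_subset[OF bounded_closed_segment[of p q]])
  show "seg_curve p q ` {0..1} \<subseteq> closed_segment p q"
    by (auto simp: seg_curve_def closed_segment_def)
qed

lemma bounded_subcurve:
  assumes "bounded (P ` {0..1})" "0 \<le> a" "a \<le> b" "b \<le> 1"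
  shows "bounded (subcurve P a b ` {0..1})"
proof (rule bounded_subset[OF assms(1)])
  have "a + u * (b - a) \<in> {0..1}" if "u \<in> {0..1}" for u
    using convex_comb_mem_interval[OF that assms(3)] assms(2,4) by auto
  then show "subcurve P a b ` {0..1} \<subseteq> P ` {0..1}"
    by (auto simp: subcurve_def)
qed

lemma frechet_dist_seg_subcurve_point: "frechet_dist (seg_curve (P a) (P a)) (subcurve P a a) \<le> 0"
  by (rule frechet_dist_le[OF bounded_seg_curve _ inc_homeo01_id])
     (auto simp: seg_curve_def subcurve_def algebra_simps image_constant_conv)

lemma seg_curve_affine:
  "seg_curve p q (r + v * (s - r)) = seg_curve (seg_curve p q r) (seg_curve p q s) v"
  by (simp add: seg_curve_def algebra_simps)

lemma subcurve_subcurve: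
  "subcurve (subcurve P a b) \<alpha> \<beta> = subcurve P (a + \<alpha> * (b - a)) (a + \<beta> * (b - a))"
  by (simp add: subcurve_def algebra_simps)

lemma norm_seg_curve_diff_le:
  fixes p q p' q' :: "'a::real_normed_vector"
  assumes "v \<in> {0..1}" "norm (p - p') \<le> e" "norm (q - q') \<le> e"
  shows "norm (seg_curve p q v - seg_curve p' q' v) \<le> e"
proof -
  have "seg_curve p q v - seg_curve p' q' v = (1 - v) *\<^sub>R (p - p') + v *\<^sub>R (q - q')"
    by (simp add: seg_curve_def algebra_simps)
  also have "norm \<dots> \<le> (1 - v) * norm (p - p') + v * norm (q - q')"
    using assms(1) norm_triangle_ineq[of "(1 - v) *\<^sub>R (p - p')" "v *\<^sub>R (q - q')"] by simp
  also have "\<dots> \<le> (1 - v) * e + v * e"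
    using assms by (intro add_mono mult_left_mono) auto
  finally show ?thesis by (simp add: algebra_simps)
qed

lemma restricted_matching_close:
  fixes P :: "real \<Rightarrow> 'a::real_normed_vector"
  assumes g: "inc_homeo01 g" and \<alpha>\<beta>: "0 \<le> \<alpha>" "\<alpha> < \<beta>" "\<beta> \<le> 1"
    and c: "a + \<alpha> * (b - a) = c" and d: "a + \<beta> * (b - a) = d"
    and close: "\<forall>u\<in>{0..1}. norm (seg_curve (P a) (P b) (g u) - subcurve P a b u) \<le> e"
    and u: "u \<in> {0..1}"
  shows "norm (seg_curve (P c) (P d) ((g (\<alpha> + u * (\<beta> - \<alpha>)) - g \<alpha>) / (g \<beta> - g \<alpha>))
           - subcurve P c d u) \<le> 2 * e"
proof -
  define g' where "g' u = (g (\<alpha> + u * (\<beta> - \<alpha>)) - g \<alpha>) / (g \<beta> - g \<alpha>)" for u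
  define w where "w = \<alpha> + u * (\<beta> - \<alpha>)"
  define R where "R r = seg_curve (P a) (P b) (g r)" for r
  have "g \<alpha> < g \<beta>" using inc_homeo01_less[OF g] \<alpha>\<beta> by auto
  then have "g w = g \<alpha> + g' u * (g \<beta> - g \<alpha>)" by (simp add: g'_def w_def)
  then have long: "seg_curve (P a) (P b) (g w) = seg_curve (R \<alpha>) (R \<beta>) (g' u)"
    unfolding R_def by (simp add: seg_curve_affine)
  have sub: "subcurve P a b w = subcurve P c d u"
    using subcurve_subcurve[of P a b \<alpha> \<beta>] unfolding c d by (metis subcurve_def w_def)
  have endpoint: "norm (P c - R \<alpha>) \<le> e" "norm (P d - R \<beta>) \<le> e"
    using close \<alpha>\<beta> c d by (auto simp: R_def subcurve_def norm_minus_commute)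
  have "w \<in> {0..1}"
    using convex_comb_mem_interval[OF u, of \<alpha> \<beta>] \<alpha>\<beta> by (auto simp: w_def)
  then have inner: "norm (seg_curve (P a) (P b) (g w) - subcurve P a b w) \<le> e"
    using close by blast
  have "seg_curve (P c) (P d) (g' u) - subcurve P c d u
      = (seg_curve (P c) (P d) (g' u) - seg_curve (R \<alpha>) (R \<beta>) (g' u))
        + (seg_curve (P a) (P b) (g w) - subcurve P a b w)"
    by (simp add: long sub)
  also have "norm \<dots> \<le> e + e"
    using norm_seg_curve_diff_le[OF inc_homeo01_in[OF inc_homeo01_restrict[OF g \<alpha>\<beta>] u] endpoint]
      inner unfolding g'_def
    by (intro order_trans[OF norm_triangle_ineq] add_mono)
  finally show ?thesis by (simp add: g'_def)
qed

lemma frechet_dist_shortcut_subinterval_le: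
  fixes P :: "real \<Rightarrow> 'a::real_normed_vector"
  assumes P: "bounded (P ` {0..1})" and abcd: "0 \<le> a" "a \<le> c" "c \<le> d" "d \<le> b" "b \<le> 1"
    and D: "frechet_dist (seg_curve (P a) (P b)) (subcurve P a b) \<le> D"
  shows "frechet_dist (seg_curve (P c) (P d)) (subcurve P c d) \<le> 2 * D"
proof (cases "c = d")
  case True
  have "0 \<le> D"
    using D frechet_dist_nonneg[OF bounded_seg_curve bounded_subcurve[OF P, of a b], of "P a" "P b"] abcd
    by linarith
  then show ?thesis using frechet_dist_seg_subcurve_point[of P c] True by simp
next
  case False
  have Pab: "bounded (subcurve P a b ` {0..1})" and Pcd: "bounded (subcurve P c d ` {0..1})"
    using abcd by (auto intro!: bounded_subcurve[OF P])
  define \<alpha> \<beta> where "\<alpha> = (c - a) / (b - a)" and "\<beta> = (d - a) / (b - a)"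
  have "a < b" using False abcd by simp
  then have \<alpha>\<beta>: "0 \<le> \<alpha>" "\<alpha> < \<beta>" "\<beta> \<le> 1"
    using False abcd by (auto simp: \<alpha>_def \<beta>_def divide_le_eq divide_strict_right_mono)
  have c: "a + \<alpha> * (b - a) = c" and d: "a + \<beta> * (b - a) = d"
    using \<open>a < b\<close> by (simp_all add: \<alpha>_def \<beta>_def)
  show ?thesis
  proof (rule field_le_epsilon)
    fix \<epsilon> :: real assume "0 < \<epsilon>"
    then have "frechet_dist (seg_curve (P a) (P b)) (subcurve P a b) < D + \<epsilon> / 2"
      using D by simp
    then obtain g where g: "inc_homeo01 g"
      and close: "\<forall>u\<in>{0..1}. norm (seg_curve (P a) (P b) (g u) - subcurve P a b u) < D + \<epsilon> / 2"
      using frechet_dist_lessE[OF bounded_seg_curve Pab] by blast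
    have "frechet_dist (seg_curve (P c) (P d)) (subcurve P c d) \<le> 2 * (D + \<epsilon> / 2)"
      using close
      by (intro frechet_dist_le[OF bounded_seg_curve Pcd inc_homeo01_restrict[OF g \<alpha>\<beta>]] ballI
          restricted_matching_close[OF g \<alpha>\<beta> c d]) (auto intro: less_imp_le)
    then show "frechet_dist (seg_curve (P c) (P d)) (subcurve P c d) \<le> 2 * D + \<epsilon>"
      by simp
  qed
qed

lemma polygonalD:
  assumes "polygonal P t m"
  shows polygonal_t_less: "i \<in> {1..m} \<Longrightarrow> j \<in> {1..m} \<Longrightarrow> i < j \<Longrightarrow> t i < t j"
    and polygonal_t_le: "i \<in> {1..m} \<Longrightarrow> j \<in> {1..m} \<Longrightarrow> i \<le> j \<Longrightarrow> t i \<le> t j"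
    and polygonal_t_unit: "i \<in> {1..m} \<Longrightarrow> t i \<in> {0..1}"
proof -
  have mono: "strict_mono_on {1..m} t" and "t 1 = 0" "t m = 1" "1 \<le> m"
    using assms unfolding polygonal_def by blast+
  show less: "i \<in> {1..m} \<Longrightarrow> j \<in> {1..m} \<Longrightarrow> i < j \<Longrightarrow> t i < t j" for i j
    using mono strict_mono_onD by blast
  then show le: "i \<in> {1..m} \<Longrightarrow> j \<in> {1..m} \<Longrightarrow> i \<le> j \<Longrightarrow> t i \<le> t j" for i j
    by (metis order.order_iff_strict)
  show "i \<in> {1..m} \<Longrightarrow> t i \<in> {0..1}" for i
    using le[of 1 i] le[of i m] \<open>t 1 = 0\<close> \<open>t m = 1\<close> \<open>1 \<le> m\<close> by auto
qed

lemma polygonal_piece_cover: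
  assumes pg: "polygonal P t m" and s: "s \<in> {0..1}"
  obtains i where "i \<in> {1..<m}" "s \<in> {t i..t (Suc i)}"
proof -
  have t1: "t 1 = 0" and tm: "t m = 1" using pg unfolding polygonal_def by blast+
  then have "1 < m" using pg unfolding polygonal_def by (cases "m = 1") auto
  define S where "S = {i\<in>{1..<m}. t i \<le> s}"
  have fin: "finite S" by (simp add: S_def)
  have "1 \<in> S" using \<open>1 < m\<close> t1 s by (simp add: S_def)
  then have i: "Max S \<in> S" using fin by (intro Max_in) auto
  have "s \<le> t (Suc (Max S))"
  proof (cases "Suc (Max S) < m")
    case True
    have "Suc (Max S) \<notin> S" using Max_ge[OF fin, of "Suc (Max S)"] by auto
    then show ?thesis using True by (auto simp: S_def)
  next
    case False
    then have "Suc (Max S) = m" using i by (simp add: S_def)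
    then show ?thesis using tm s by simp
  qed
  with i that show ?thesis by (auto simp: S_def)
qed

lemma polygonal_bounded:
  fixes P :: "real \<Rightarrow> 'a::real_normed_vector"
  assumes pg: "polygonal P t m"
  shows "bounded (P ` {0..1})"
proof (rule bounded_subset)
  show "bounded (\<Union>i\<in>{1..<m}. closed_segment (P (t i)) (P (t (Suc i))))"
    by (intro bounded_UN ballI bounded_closed_segment) simp
  show "P ` {0..1} \<subseteq> (\<Union>i\<in>{1..<m}. closed_segment (P (t i)) (P (t (Suc i))))"
  proof clarify
    fix s :: real assume "s \<in> {0..1}"
    then obtain i where i: "i \<in> {1..<m}" and s: "s \<in> {t i..t (Suc i)}"
      using polygonal_piece_cover[OF pg] by blast
    define \<theta> where "\<theta> = (s - t i) / (t (Suc i) - t i)"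
    have "t i < t (Suc i)" using polygonal_t_less[OF pg] i by simp
    then have "0 \<le> \<theta>" "\<theta> \<le> 1" using s by (auto simp: \<theta>_def divide_le_eq)
    moreover have "P s = (1 - \<theta>) *\<^sub>R P (t i) + \<theta> *\<^sub>R P (t (Suc i))"
      using pg i s unfolding polygonal_def \<theta>_def by (simp add: algebra_simps)
    ultimately have "P s \<in> closed_segment (P (t i)) (P (t (Suc i)))"
      unfolding closed_segment_def by blast
    with i show "P s \<in> (\<Union>i\<in>{1..<m}. closed_segment (P (t i)) (P (t (Suc i))))" by blast
  qed
qed

lemma Least_suffix_threshold:
  fixes lo hi :: nat
  assumes "lo \<le> hi" "good hi"
    and strong_good: "\<And>x x'. lo \<le> x \<Longrightarrow> x \<le> x' \<Longrightarrow> x' \<le> hi \<Longrightarrow> strong x \<Longrightarrow> good x'"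
  defines "L \<equiv> LEAST x'. x' \<in> {lo..hi} \<and> (\<forall>x\<in>{x'..hi}. good x)"
  shows "\<forall>x\<in>{L..hi}. good x" and "\<forall>x\<in>{lo..<L}. \<not> strong x"
proof -
  have L: "L \<in> {lo..hi} \<and> (\<forall>x\<in>{L..hi}. good x)"
    unfolding L_def by (rule LeastI[of _ hi]) (use assms in auto)
  then show "\<forall>x\<in>{L..hi}. good x" by blast
  show "\<forall>x\<in>{lo..<L}. \<not> strong x"
  proof (intro ballI notI)
    fix x assume x: "x \<in> {lo..<L}" and "strong x"
    then have "x \<in> {lo..hi} \<and> (\<forall>x'\<in>{x..hi}. good x')"
      using L strong_good by auto
    then have "L \<le> x" unfolding L_def by (rule Least_le)
    with x show False by simp
  qed
qed

lemma Greatest_prefix_threshold: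
  fixes lo hi :: nat
  assumes "lo \<le> hi" "good lo"
    and strong_good: "\<And>y y'. lo \<le> y' \<Longrightarrow> y' \<le> y \<Longrightarrow> y \<le> hi \<Longrightarrow> strong y \<Longrightarrow> good y'"
  defines "G \<equiv> GREATEST y'. y' \<in> {lo..hi} \<and> (\<forall>y\<in>{lo..y'}. good y)"
  shows "\<forall>y\<in>{lo..G}. good y" and "\<forall>y\<in>{G<..hi}. \<not> strong y"
proof -
  have G: "G \<in> {lo..hi} \<and> (\<forall>y\<in>{lo..G}. good y)"
    unfolding G_def by (rule GreatestI_nat[of _ lo hi]) (use assms in auto)
  then show "\<forall>y\<in>{lo..G}. good y" by blast
  show "\<forall>y\<in>{G<..hi}. \<not> strong y"
  proof (intro ballI notI)
    fix y assume y: "y \<in> {G<..hi}" and "strong y"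
    then have "y \<in> {lo..hi} \<and> (\<forall>y'\<in>{lo..y}. good y')"
      using G strong_good by auto
    then have "y \<le> G" unfolding G_def by (rule Greatest_le_nat[of _ _ hi]) auto
    with y show False by simp
  qed
qed

theorem mainTheorem3:
  fixes P :: "real \<Rightarrow> 'a::euclidean_space" and t :: "nat \<Rightarrow> real" and m :: nat and \<Delta> :: real
  assumes "polygonal P t m" and "\<Delta> > 0" and "z \<in> {1..m-1}"
  shows "(\<forall>x\<in>{x_idx P t \<Delta> z..z}. frechet_dist (tau P t x z) (subcurve P (t x) (t z)) \<le> 4 * \<Delta>) \<and>
         (\<forall>y\<in>{z+1..y_idx P t m \<Delta> z}. frechet_dist (tau P t (z+1) y) (subcurve P (t (z+1)) (t y)) \<le> 4 * \<Delta>) \<and>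
         (\<forall>x\<in>{1..<x_idx P t \<Delta> z}. frechet_dist (tau P t x z) (subcurve P (t x) (t z)) > 2 * \<Delta>) \<and>
         (\<forall>y\<in>{y_idx P t m \<Delta> z<..m}. frechet_dist (tau P t (z+1) y) (subcurve P (t (z+1)) (t y)) > 2 * \<Delta>)"
proof -
  define f where "f i j = frechet_dist (tau P t i j) (subcurve P (t i) (t j))" for i j
  have shortcut: "f i' j' \<le> 4 * \<Delta>"
    if ij: "1 \<le> i" "i \<le> i'" "i' \<le> j'" "j' \<le> j" "j \<le> m" and "f i j \<le> 2 * \<Delta>" for i i' j j'
  proof -
    have "t i \<in> {0..1}" "t j \<in> {0..1}" using ij polygonal_t_unit[OF assms(1)] by auto
    moreover have "t i \<le> t i'" "t i' \<le> t j'" "t j' \<le> t j"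
      using ij polygonal_t_le[OF assms(1)] by auto
    ultimately have "frechet_dist (seg_curve (P (t i')) (P (t j'))) (subcurve P (t i') (t j'))
        \<le> 2 * (2 * \<Delta>)"
      using \<open>f i j \<le> 2 * \<Delta>\<close> unfolding f_def tau_def
      by (intro frechet_dist_shortcut_subinterval_le[OF polygonal_bounded[OF assms(1)], where D = "2 * \<Delta>"])
        auto
    then show ?thesis by (simp add: f_def tau_def)
  qed
  have point: "f i i \<le> 4 * \<Delta>" for i
    using frechet_dist_seg_subcurve_point[of P "t i"] assms(2) by (simp add: f_def tau_def)
  have z: "1 \<le> z" "z + 1 \<le> m" using assms(3) by auto
  have left: "f x' z \<le> 4 * \<Delta>" if "1 \<le> x" "x \<le> x'" "x' \<le> z" "f x z \<le> 2 * \<Delta>" for x x'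
    using shortcut[of x x' z z] that z by simp
  have right: "f (z+1) y' \<le> 4 * \<Delta>" if "z+1 \<le> y'" "y' \<le> y" "y \<le> m" "f (z+1) y \<le> 2 * \<Delta>" for y y'
    using shortcut[of "z+1" "z+1" y' y] that by simp
  have "\<forall>x\<in>{x_idx P t \<Delta> z..z}. f x z \<le> 4 * \<Delta>" "\<forall>x\<in>{1..<x_idx P t \<Delta> z}. \<not> f x z \<le> 2 * \<Delta>"
    unfolding x_idx_def f_def[symmetric]
    by (rule Least_suffix_threshold[where good = "\<lambda>x. f x z \<le> 4 * \<Delta>", OF z(1) point left];
        assumption)+
  moreover have "\<forall>y\<in>{z+1..y_idx P t m \<Delta> z}. f (z+1) y \<le> 4 * \<Delta>"
      "\<forall>y\<in>{y_idx P t m \<Delta> z<..m}. \<not> f (z+1) y \<le> 2 * \<Delta>"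
    unfolding y_idx_def f_def[symmetric]
    by (rule Greatest_prefix_threshold[where good = "\<lambda>y. f (z+1) y \<le> 4 * \<Delta>", OF z(2) point right];
        assumption)+
  ultimately show ?thesis unfolding f_def not_le by blast
qed

end
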